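(* Let $J$ be a finite set, and let $Y$ and $X_j$ ($j\in J$) be Banach lattices on a measure space $(\Omega,\Sigma,\mu)$. Then for every $\theta\in(0,1)$, \[\bigoplus_{j\in J}\big(X_j^{1-\theta}Y^\theta\big)=\Big(\bigoplus_{j\in J}X_j\Big)^{1-\theta}Y^\theta\] as sets, and both inclusion maps $\bigoplus_{j\in J}(X_j^{1-\theta}Y^\theta)\hookrightarrow(\bigoplus_{j\in J}X_j)^{1-\theta}Y^\theta$ and $(\bigoplus_{j\in J}X_j)^{1-\theta}Y^\theta\hookrightarrow\bigoplus_{j\in J}(X_j^{1-\theta}Y^\theta)$ have norm at most $\operatorname{card}J$.
   Context: For a finite family of Banach spaces $Z_j$ contained in a common linear space, $\bigoplus_{j\in J}Z_j$ denotes $\bigcap_j Z_j$ with the norm $\|x\|=\sum_{j\in J}\|x\|_{Z_j}$. For Banach lattices $X_0,X_1$ on $(\Omega,\Sigma,\mu)$ and $\theta\in(0,1)$, the Calderón product $X_0^{1-\theta}X_1^\theta$ is the space of measurable $x$ such that $|x|\le\lambda|x_0|^{1-\theta}|x_1|^\theta$ $\mu$-a.e. for some $\lambda>0$ and some $x_i\in X_i$ with $\|x_i\|_{X_i}\le1$; its norm is the infimum of such $\lambda$. *)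

theory Defs
  imports "HOL-Analysis.Analysis"
begin

text \<open>A (real) Banach lattice on the measure space M (a Banach function lattice / Koethe
  space): a set X of real-valued measurable functions on M (elements identified up to
  mu-a.e. equality through the norm), together with a norm N, which is a linear space,
  is solid (an ideal: |y| <= |x| a.e. with x in X forces y in X and N y <= N x),
  is normed (N x = 0 iff x = 0 a.e.), and is complete.\<close>
definition banach_lattice ::
  "'a measure \<Rightarrow> ('a \<Rightarrow> real) set \<Rightarrow> (('a \<Rightarrow> real) \<Rightarrow> real) \<Rightarrow> bool" where
  "banach_lattice M X N \<longleftrightarrow>
     X \<subseteq> borel_measurable M \<and>
     (\<lambda>_. 0) \<in> X \<and>
     (\<forall>x\<in>X. \<forall>y\<in>X. (\<lambda>\<omega>. x \<omega> + y \<omega>) \<in> X) \<and>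
     (\<forall>x\<in>X. \<forall>c::real. (\<lambda>\<omega>. c * x \<omega>) \<in> X) \<and>
     (\<forall>x\<in>X. \<forall>y\<in>borel_measurable M.
        (AE \<omega> in M. \<bar>y \<omega>\<bar> \<le> \<bar>x \<omega>\<bar>) \<longrightarrow> y \<in> X \<and> N y \<le> N x) \<and>
     (\<forall>x\<in>X. \<forall>y\<in>X. N (\<lambda>\<omega>. x \<omega> + y \<omega>) \<le> N x + N y) \<and>
     (\<forall>x\<in>X. \<forall>c::real. N (\<lambda>\<omega>. c * x \<omega>) = \<bar>c\<bar> * N x) \<and>
     (\<forall>x\<in>X. N x = 0 \<longleftrightarrow> (AE \<omega> in M. x \<omega> = 0)) \<and>
     (\<forall>s::nat \<Rightarrow> 'a \<Rightarrow> real. (\<forall>n. s n \<in> X) \<and>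
        (\<forall>e>0. \<exists>K. \<forall>m\<ge>K. \<forall>n\<ge>K. N (\<lambda>\<omega>. s m \<omega> - s n \<omega>) < e) \<longrightarrow>
        (\<exists>x\<in>X. (\<lambda>n. N (\<lambda>\<omega>. s n \<omega> - x \<omega>)) \<longlonglongrightarrow> 0))"

text \<open>Finite intersection sum: the set \<Inter>_j X_j (inside the common space of measurable
  functions) with norm \<Sum>_j N_j.\<close>
definition dsum_set ::
  "'a measure \<Rightarrow> 'j set \<Rightarrow> ('j \<Rightarrow> ('a \<Rightarrow> real) set) \<Rightarrow> ('a \<Rightarrow> real) set" where
  "dsum_set M J X = {x \<in> borel_measurable M. \<forall>j\<in>J. x \<in> X j}"

definition dsum_norm ::
  "'j set \<Rightarrow> ('j \<Rightarrow> ('a \<Rightarrow> real) \<Rightarrow> real) \<Rightarrow> ('a \<Rightarrow> real) \<Rightarrow> real" where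
  "dsum_norm J N x = (\<Sum>j\<in>J. N j x)"

definition calderon_witness ::
  "'a measure \<Rightarrow> ('a \<Rightarrow> real) set \<Rightarrow> (('a \<Rightarrow> real) \<Rightarrow> real) \<Rightarrow>
   ('a \<Rightarrow> real) set \<Rightarrow> (('a \<Rightarrow> real) \<Rightarrow> real) \<Rightarrow> real \<Rightarrow> ('a \<Rightarrow> real) \<Rightarrow> real \<Rightarrow> bool" where
  "calderon_witness M X0 N0 X1 N1 \<theta> x c \<longleftrightarrow> c > 0 \<and>
     (\<exists>x0\<in>X0. \<exists>x1\<in>X1. N0 x0 \<le> 1 \<and> N1 x1 \<le> 1 \<and>
        (AE \<omega> in M. \<bar>x \<omega>\<bar> \<le> c * (\<bar>x0 \<omega>\<bar> powr (1 - \<theta>) * \<bar>x1 \<omega>\<bar> powr \<theta>)))"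

definition calderon_set ::
  "'a measure \<Rightarrow> ('a \<Rightarrow> real) set \<Rightarrow> (('a \<Rightarrow> real) \<Rightarrow> real) \<Rightarrow>
   ('a \<Rightarrow> real) set \<Rightarrow> (('a \<Rightarrow> real) \<Rightarrow> real) \<Rightarrow> real \<Rightarrow> ('a \<Rightarrow> real) set" where
  "calderon_set M X0 N0 X1 N1 \<theta> =
     {x \<in> borel_measurable M. \<exists>c. calderon_witness M X0 N0 X1 N1 \<theta> x c}"

definition calderon_norm ::
  "'a measure \<Rightarrow> ('a \<Rightarrow> real) set \<Rightarrow> (('a \<Rightarrow> real) \<Rightarrow> real) \<Rightarrow>
   ('a \<Rightarrow> real) set \<Rightarrow> (('a \<Rightarrow> real) \<Rightarrow> real) \<Rightarrow> real \<Rightarrow> ('a \<Rightarrow> real) \<Rightarrow> real" where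
  "calderon_norm M X0 N0 X1 N1 \<theta> x = Inf {c. calderon_witness M X0 N0 X1 N1 \<theta> x c}"

end

theory Submission imports Defs begin

text \<open>
  A witness \<open>(c, x\<^sub>0, y)\<close> for the product over the intersection is a witness for every
  factor, since \<open>\<parallel>x\<^sub>0\<parallel>\<^sub>X\<^sub>j \<le> \<Sum>\<^sub>i \<parallel>x\<^sub>0\<parallel>\<^sub>X\<^sub>i\<close>. Conversely, given witnesses \<open>(c\<^sub>j, x\<^sub>j, y\<^sub>j)\<close> for all
  factors and \<open>S = \<Sum>\<^sub>j c\<^sub>j\<close>, \<open>n = card J\<close>, the functions \<open>x\<^sub>0 = min\<^sub>j (c\<^sub>j/S) |x\<^sub>j|\<close> and
  \<open>y = (1/n) \<Sum>\<^sub>j |y\<^sub>j|\<close> lie in the unit balls of \<open>\<Inter>\<^sub>j X\<^sub>j\<close> and \<open>Y\<close>, and at every point the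
  index realising the minimum gives \<open>|x| \<le> n S x\<^sub>0\<^sup>1\<^sup>-\<^sup>\<theta> y\<^sup>\<theta>\<close>. Passing to infima of the
  witnessing constants yields both norm estimates.
\<close>

lemma banach_lattice_measurable:
  "banach_lattice M X N \<Longrightarrow> x \<in> X \<Longrightarrow> x \<in> borel_measurable M"
  unfolding banach_lattice_def by blast

lemma banach_lattice_solid:
  assumes "banach_lattice M X N" "x \<in> X" "y \<in> borel_measurable M"
    "AE \<omega> in M. \<bar>y \<omega>\<bar> \<le> \<bar>x \<omega>\<bar>"
  shows "y \<in> X" "N y \<le> N x"
  using assms unfolding banach_lattice_def by blast+

lemma banach_lattice_scale:
  assumes "banach_lattice M X N" "x \<in> X"
  shows "(\<lambda>\<omega>. c * x \<omega>) \<in> X" "N (\<lambda>\<omega>. c * x \<omega>) = \<bar>c\<bar> * N x"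
  using assms unfolding banach_lattice_def by blast+

lemma banach_lattice_add:
  assumes "banach_lattice M X N" "x \<in> X" "y \<in> X"
  shows "(\<lambda>\<omega>. x \<omega> + y \<omega>) \<in> X" "N (\<lambda>\<omega>. x \<omega> + y \<omega>) \<le> N x + N y"
  using assms unfolding banach_lattice_def by blast+

lemma banach_lattice_zero:
  assumes "banach_lattice M X N"
  shows "(\<lambda>_. 0) \<in> X" "N (\<lambda>_. 0) = 0"
proof -
  show zero: "(\<lambda>_. 0) \<in> X"
    using assms unfolding banach_lattice_def by blast
  show "N (\<lambda>_. 0) = 0"
    using banach_lattice_scale(2)[OF assms zero, of 0] by simp
qed

lemma banach_lattice_nonneg:
  assumes "banach_lattice M X N" "x \<in> X"
  shows "0 \<le> N x"
proof -
  have "N (\<lambda>_. 0) \<le> N x + N (\<lambda>\<omega>. (-1) * x \<omega>)"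
    using banach_lattice_add[OF assms(1,2) banach_lattice_scale(1)[OF assms, of "-1"]] by simp
  then show ?thesis
    using banach_lattice_zero(2)[OF assms(1)] banach_lattice_scale(2)[OF assms, of "-1"] by simp
qed

lemma banach_lattice_abs:
  assumes "banach_lattice M X N" "x \<in> X"
  shows "(\<lambda>\<omega>. \<bar>x \<omega>\<bar>) \<in> X" "N (\<lambda>\<omega>. \<bar>x \<omega>\<bar>) \<le> N x"
  using banach_lattice_solid[OF assms, of "\<lambda>\<omega>. \<bar>x \<omega>\<bar>"] banach_lattice_measurable[OF assms]
  by auto

lemma banach_lattice_sum:
  assumes "banach_lattice M X N" "finite I" "\<And>i. i \<in> I \<Longrightarrow> f i \<in> X"
  shows "(\<lambda>\<omega>. \<Sum>i\<in>I. f i \<omega>) \<in> X \<and> N (\<lambda>\<omega>. \<Sum>i\<in>I. f i \<omega>) \<le> (\<Sum>i\<in>I. N (f i))"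
  using assms(2,3)
proof (induction I rule: finite_induct)
  case empty
  then show ?case using banach_lattice_zero[OF assms(1)] by simp
next
  case (insert i I)
  then show ?case
    using banach_lattice_add[of M X N "f i" "\<lambda>\<omega>. \<Sum>i\<in>I. f i \<omega>", OF assms(1)] by fastforce
qed

lemma dsum_set_Min_scaled_abs:
  fixes K :: "'j \<Rightarrow> real"
  assumes "finite J" "J \<noteq> {}" "\<And>j. j \<in> J \<Longrightarrow> banach_lattice M (X j) (NX j)"
    and "\<And>j. j \<in> J \<Longrightarrow> x j \<in> X j" "\<And>j. j \<in> J \<Longrightarrow> NX j (x j) \<le> 1"
    and "\<And>j. j \<in> J \<Longrightarrow> 0 \<le> K j"
  defines "m \<equiv> \<lambda>\<omega>. Min ((\<lambda>j. K j * \<bar>x j \<omega>\<bar>) ` J)"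
  shows "m \<in> dsum_set M J X" "dsum_norm J NX m \<le> sum K J"
proof -
  have m_nonneg: "0 \<le> m \<omega>" for \<omega>
    unfolding m_def using assms(1,2,6) by (simp add: Min_ge_iff)
  have "m \<in> borel_measurable M"
    unfolding m_def using assms(1) banach_lattice_measurable[OF assms(3,4)] by measurable
  moreover have "m \<in> X j \<and> NX j m \<le> K j" if j: "j \<in> J" for j
  proof -
    note BXj = assms(3)[OF j] and xj = assms(4)[OF j]
    have Kx: "(\<lambda>\<omega>. K j * \<bar>x j \<omega>\<bar>) \<in> X j"
      using banach_lattice_scale(1)[OF BXj banach_lattice_abs(1)[OF BXj xj]] .
    have "AE \<omega> in M. \<bar>m \<omega>\<bar> \<le> \<bar>K j * \<bar>x j \<omega>\<bar>\<bar>"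
      using m_nonneg assms(1,6) j by (auto simp: m_def)
    note dominated = banach_lattice_solid[OF BXj Kx \<open>m \<in> borel_measurable M\<close> this]
    have "NX j m \<le> NX j (\<lambda>\<omega>. K j * \<bar>x j \<omega>\<bar>)"
      using dominated(2) .
    also have "\<dots> = K j * NX j (\<lambda>\<omega>. \<bar>x j \<omega>\<bar>)"
      using banach_lattice_scale(2)[OF BXj banach_lattice_abs(1)[OF BXj xj]] assms(6)[OF j] by simp
    also have "\<dots> \<le> K j"
      using banach_lattice_abs(2)[OF BXj xj] assms(5,6)[OF j] by (simp add: mult_left_le)
    finally show ?thesis using dominated(1) by simp
  qed
  ultimately show "m \<in> dsum_set M J X" "dsum_norm J NX m \<le> sum K J"
    unfolding dsum_set_def dsum_norm_def by (auto intro: sum_mono)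
qed

lemma banach_lattice_mean_abs:
  assumes "banach_lattice M Y NY" "finite J" "J \<noteq> {}"
    and "\<And>j. j \<in> J \<Longrightarrow> y j \<in> Y" "\<And>j. j \<in> J \<Longrightarrow> NY (y j) \<le> 1"
  defines "m \<equiv> \<lambda>\<omega>. (1 / real (card J)) * (\<Sum>j\<in>J. \<bar>y j \<omega>\<bar>)"
  shows "m \<in> Y" "NY m \<le> 1"
proof -
  have n: "0 < real (card J)" using assms(2,3) by (simp add: card_gt_0_iff)
  have sum: "(\<lambda>\<omega>. \<Sum>j\<in>J. \<bar>y j \<omega>\<bar>) \<in> Y \<and> NY (\<lambda>\<omega>. \<Sum>j\<in>J. \<bar>y j \<omega>\<bar>) \<le> (\<Sum>j\<in>J. NY (y j))"
    using banach_lattice_sum[OF assms(1,2), of "\<lambda>j \<omega>. \<bar>y j \<omega>\<bar>"]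
      banach_lattice_abs[OF assms(1,4)] sum_mono[of J "\<lambda>j. NY (\<lambda>\<omega>. \<bar>y j \<omega>\<bar>)" "\<lambda>j. NY (y j)"]
    by fastforce
  have "(\<Sum>j\<in>J. NY (y j)) \<le> real (card J)"
    using sum_mono[of J "\<lambda>j. NY (y j)" "\<lambda>_. 1"] assms(5) by simp
  with sum have "NY (\<lambda>\<omega>. \<Sum>j\<in>J. \<bar>y j \<omega>\<bar>) \<le> real (card J)" by linarith
  moreover note scaled = banach_lattice_scale[OF assms(1) conjunct1[OF sum], of "1 / real (card J)"]
  ultimately have "real (card J) * NY m \<le> real (card J) * 1"
    using n by (simp add: m_def)
  then show "NY m \<le> 1"
    using n by simp
  show "m \<in> Y"
    using scaled by (simp add: m_def)
qed

lemma interpolation_powr_rescale: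
  fixes a b c y S n \<theta> :: real
  assumes "0 < c" "c \<le> S" "1 \<le> n" "0 \<le> a" "0 \<le> b" "b \<le> n * y" "0 < \<theta>" "\<theta> < 1"
  shows "c * (a powr (1 - \<theta>) * b powr \<theta>) \<le> n * S * ((c / S * a) powr (1 - \<theta>) * y powr \<theta>)"
proof -
  have S: "0 < S" using assms by linarith
  have "0 \<le> n * y" using assms by linarith
  then have y: "0 \<le> y" using assms by (simp add: zero_le_mult_iff)
  have cS: "0 \<le> c / S" "c / S \<le> 1" using assms S by auto
  have n_powr: "(n * y) powr \<theta> \<le> n * y powr \<theta>"
  proof -
    have "n powr \<theta> \<le> n powr 1"
      using assms by (intro powr_mono) auto
    then show ?thesis
      using assms y by (simp add: powr_mult mult_right_mono)
  qed
  have c_eq: "c = S * ((c / S) powr (1 - \<theta>) * (c / S) powr \<theta>)"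
    using S assms by (simp add: powr_add[symmetric])
  have split: "(c / S * a) powr (1 - \<theta>) = (c / S) powr (1 - \<theta>) * a powr (1 - \<theta>)"
    using cS assms by (simp add: powr_mult del: times_divide_eq_left)
  have "c * (a powr (1 - \<theta>) * b powr \<theta>)
      = S * ((c / S) powr (1 - \<theta>) * (c / S) powr \<theta>) * (a powr (1 - \<theta>) * b powr \<theta>)"
    by (metis c_eq)
  also have "\<dots> = S * ((c / S * a) powr (1 - \<theta>) * ((c / S) powr \<theta> * b powr \<theta>))"
    unfolding split by (simp add: mult_ac)
  also have "\<dots> \<le> S * ((c / S * a) powr (1 - \<theta>) * (1 * (n * y) powr \<theta>))"
    using assms S cS
    by (intro mult_left_mono mult_mono powr_le1 powr_mono2) auto
  also have "\<dots> \<le> S * ((c / S * a) powr (1 - \<theta>) * (n * y powr \<theta>))"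
    using assms S y n_powr by (intro mult_left_mono) auto
  finally show ?thesis by (simp add: mult_ac)
qed

lemma dsum_set_subset: "j \<in> J \<Longrightarrow> dsum_set M J X \<subseteq> X j"
  unfolding dsum_set_def by blast

lemma dsum_norm_ge_component:
  assumes "finite J" "j \<in> J" "\<And>j. j \<in> J \<Longrightarrow> banach_lattice M (X j) (NX j)"
    and "x \<in> dsum_set M J X"
  shows "NX j x \<le> dsum_norm J NX x"
  unfolding dsum_norm_def
  using assms banach_lattice_nonneg[OF assms(3)] unfolding dsum_set_def
  by (intro member_le_sum) auto

lemma calderon_witness_mono_space:
  assumes "calderon_witness M X0 N0 X1 N1 \<theta> x c" "X0 \<subseteq> X0'" "\<And>u. u \<in> X0 \<Longrightarrow> N0' u \<le> N0 u"
  shows "calderon_witness M X0' N0' X1 N1 \<theta> x c"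
  using assms unfolding calderon_witness_def by (meson order_trans subsetD)

lemma bdd_below_calderon_witness: "bdd_below {c. calderon_witness M X0 N0 X1 N1 \<theta> x c}"
  by (rule bdd_belowI[of _ 0]) (simp add: calderon_witness_def)

lemma calderon_witness_dsum_component:
  assumes "calderon_witness M (dsum_set M J X) (dsum_norm J NX) Y NY \<theta> x c"
    and "finite J" "j \<in> J" "\<And>j. j \<in> J \<Longrightarrow> banach_lattice M (X j) (NX j)"
  shows "calderon_witness M (X j) (NX j) Y NY \<theta> x c"
  using assms(1) dsum_set_subset[OF assms(3)] dsum_norm_ge_component[OF assms(2-4)]
  by (rule calderon_witness_mono_space)

lemma calderon_witness_choice:
  assumes "\<forall>j\<in>J. calderon_witness M (X j) (NX j) Y NY \<theta> x (c j)"
  shows "\<exists>u v. \<forall>j\<in>J. 0 < c j \<and> u j \<in> X j \<and> NX j (u j) \<le> 1 \<and> v j \<in> Y \<and> NY (v j) \<le> 1 \<and>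
    (AE \<omega> in M. \<bar>x \<omega>\<bar> \<le> c j * (\<bar>u j \<omega>\<bar> powr (1 - \<theta>) * \<bar>v j \<omega>\<bar> powr \<theta>))"
proof -
  have "\<forall>j\<in>J. \<exists>p. 0 < c j \<and> fst p \<in> X j \<and> NX j (fst p) \<le> 1 \<and> snd p \<in> Y \<and> NY (snd p) \<le> 1 \<and>
      (AE \<omega> in M. \<bar>x \<omega>\<bar> \<le> c j * (\<bar>fst p \<omega>\<bar> powr (1 - \<theta>) * \<bar>snd p \<omega>\<bar> powr \<theta>))"
    using assms unfolding calderon_witness_def by fastforce
  from bchoice[OF this] obtain p where "\<forall>j\<in>J. 0 < c j \<and> fst (p j) \<in> X j \<and> NX j (fst (p j)) \<le> 1 \<and>
      snd (p j) \<in> Y \<and> NY (snd (p j)) \<le> 1 \<and>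
      (AE \<omega> in M. \<bar>x \<omega>\<bar> \<le> c j * (\<bar>fst (p j) \<omega>\<bar> powr (1 - \<theta>) * \<bar>snd (p j) \<omega>\<bar> powr \<theta>))"
    by blast
  then show ?thesis
    by (intro exI[of _ "fst \<circ> p"] exI[of _ "snd \<circ> p"]) simp
qed

lemma Min_interpolation_bound:
  fixes a b c :: "'j \<Rightarrow> real"
  assumes "finite J" "J \<noteq> {}" "\<And>j. j \<in> J \<Longrightarrow> 0 < c j"
    and "\<And>j. j \<in> J \<Longrightarrow> 0 \<le> a j" "\<And>j. j \<in> J \<Longrightarrow> 0 \<le> b j" "0 < \<theta>" "\<theta> < 1"
    and "\<forall>j\<in>J. v \<le> c j * (a j powr (1 - \<theta>) * b j powr \<theta>)"
  shows "v \<le> real (card J) * sum c J *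
    ((MIN j\<in>J. c j / sum c J * a j) powr (1 - \<theta>) * (1 / real (card J) * (\<Sum>j\<in>J. b j)) powr \<theta>)"
proof -
  define n where "n = real (card J)"
  define S where "S = sum c J"
  have n: "1 \<le> n" using assms(1,2) by (simp add: n_def Suc_leI card_gt_0_iff)
  have "(MIN j\<in>J. c j / S * a j) \<in> (\<lambda>j. c j / S * a j) ` J"
    using assms(1,2) by (intro Min_in) auto
  then obtain j where j: "j \<in> J" and min_eq: "(MIN j\<in>J. c j / S * a j) = c j / S * a j"
    by auto
  have "c j \<le> S"
    unfolding S_def using assms(1,3) j by (intro member_le_sum) (auto intro: less_imp_le)
  moreover have "b j \<le> (\<Sum>j\<in>J. b j)"
    using assms(1,5) j by (intro member_le_sum) auto
  then have "b j \<le> n * (1 / n * (\<Sum>j\<in>J. b j))"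
    using n by simp
  ultimately have "c j * (a j powr (1 - \<theta>) * b j powr \<theta>)
      \<le> n * S * ((c j / S * a j) powr (1 - \<theta>) * (1 / n * (\<Sum>j\<in>J. b j)) powr \<theta>)"
    using assms(3-7) j n by (intro interpolation_powr_rescale) auto
  then show ?thesis
    using assms(8) j min_eq by (fastforce simp: n_def S_def)
qed

lemma calderon_witness_dsum:
  assumes "finite J" "J \<noteq> {}" "\<And>j. j \<in> J \<Longrightarrow> banach_lattice M (X j) (NX j)"
    and "banach_lattice M Y NY" "0 < \<theta>" "\<theta> < 1"
    and "\<forall>j\<in>J. calderon_witness M (X j) (NX j) Y NY \<theta> x (c j)"
  shows "calderon_witness M (dsum_set M J X) (dsum_norm J NX) Y NY \<theta> x (real (card J) * sum c J)"
proof -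
  from calderon_witness_choice[OF assms(7)] obtain u v where witnesses: "\<forall>j\<in>J. 0 < c j \<and>
    u j \<in> X j \<and> NX j (u j) \<le> 1 \<and> v j \<in> Y \<and> NY (v j) \<le> 1 \<and>
    (AE \<omega> in M. \<bar>x \<omega>\<bar> \<le> c j * (\<bar>u j \<omega>\<bar> powr (1 - \<theta>) * \<bar>v j \<omega>\<bar> powr \<theta>))"
    by blast
  then have c_pos: "0 < c j" and u: "u j \<in> X j \<and> NX j (u j) \<le> 1"
    and v: "v j \<in> Y \<and> NY (v j) \<le> 1" if "j \<in> J" for j
    using that by blast+
  define S where "S = sum c J"
  define x0 where "x0 = (\<lambda>\<omega>. MIN j\<in>J. c j / S * \<bar>u j \<omega>\<bar>)"
  define y where "y = (\<lambda>\<omega>. 1 / real (card J) * (\<Sum>j\<in>J. \<bar>v j \<omega>\<bar>))"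
  have S: "0 < S" unfolding S_def using assms(1,2) c_pos by (intro sum_pos) auto
  have weights: "0 \<le> c j / S" if "j \<in> J" for j
    using c_pos[OF that] S by simp
  have "sum (\<lambda>j. c j / S) J = 1"
    using S by (simp add: S_def sum_divide_distrib[symmetric])
  then have x0: "x0 \<in> dsum_set M J X" "dsum_norm J NX x0 \<le> 1"
    unfolding x0_def
    using dsum_set_Min_scaled_abs[where X = X and NX = NX and x = u and K = "\<lambda>j. c j / S",
        OF assms(1-3)] u weights
    by simp_all
  have y: "y \<in> Y" "NY y \<le> 1"
    unfolding y_def using banach_lattice_mean_abs[where y = v, OF assms(4,1,2)] v by simp_all
  have x0_nonneg: "\<bar>x0 \<omega>\<bar> = x0 \<omega>" for \<omega>
    unfolding x0_def using assms(1,2) S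
    by (auto simp: Min_ge_iff less_imp_le[OF c_pos] intro!: divide_nonneg_pos mult_nonneg_nonneg)
  have y_nonneg: "\<bar>y \<omega>\<bar> = y \<omega>" for \<omega>
    unfolding y_def by (simp add: sum_nonneg)
  have "AE \<omega> in M. \<forall>j\<in>J. \<bar>x \<omega>\<bar> \<le> c j * (\<bar>u j \<omega>\<bar> powr (1 - \<theta>) * \<bar>v j \<omega>\<bar> powr \<theta>)"
    using witnesses by (intro eventually_ball_finite[OF assms(1)]) blast
  then have "AE \<omega> in M. \<bar>x \<omega>\<bar> \<le> real (card J) * S * (\<bar>x0 \<omega>\<bar> powr (1 - \<theta>) * \<bar>y \<omega>\<bar> powr \<theta>)"
  proof (rule eventually_mono)
    fix \<omega>
    assume "\<forall>j\<in>J. \<bar>x \<omega>\<bar> \<le> c j * (\<bar>u j \<omega>\<bar> powr (1 - \<theta>) * \<bar>v j \<omega>\<bar> powr \<theta>)"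
    then show "\<bar>x \<omega>\<bar> \<le> real (card J) * S * (\<bar>x0 \<omega>\<bar> powr (1 - \<theta>) * \<bar>y \<omega>\<bar> powr \<theta>)"
      unfolding x0_nonneg y_nonneg unfolding x0_def y_def S_def
      by (intro Min_interpolation_bound) (use assms(1,2,5,6) c_pos in auto)
  qed
  moreover have "0 < real (card J) * S"
    using assms(1,2) S by (simp add: card_gt_0_iff)
  ultimately show ?thesis
    unfolding calderon_witness_def S_def[symmetric] using x0 y by auto
qed

lemma cInf_le_scaled_sum_cInf:
  fixes A :: "'j \<Rightarrow> real set" and B :: "real set" and n :: real
  assumes "finite J" "\<And>j. j \<in> J \<Longrightarrow> A j \<noteq> {}" "\<And>j. j \<in> J \<Longrightarrow> bdd_below (A j)"
    and "bdd_below B" "0 \<le> n"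
    and "\<And>c. (\<And>j. j \<in> J \<Longrightarrow> c j \<in> A j) \<Longrightarrow> n * sum c J \<in> B"
  shows "Inf B \<le> n * (\<Sum>j\<in>J. Inf (A j))"
proof (rule field_le_epsilon)
  fix e :: real
  assume "0 < e"
  define d where "d = e / (n * real (card J) + 1)"
  have denominator: "0 < n * real (card J) + 1"
    using assms(5) by (simp add: add_nonneg_pos)
  have d: "0 < d" "n * real (card J) * d \<le> e"
    using \<open>0 < e\<close> denominator by (auto simp: d_def field_simps)
  have "\<forall>j\<in>J. \<exists>c. c \<in> A j \<and> c < Inf (A j) + d"
    using assms(2) d(1) by (meson cInf_lessD less_add_same_cancel1)
  then obtain c where c: "c j \<in> A j" "c j < Inf (A j) + d" if "j \<in> J" for j
    by metis
  have "Inf B \<le> n * sum c J"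
    using assms(4,6) c(1) by (intro cInf_lower) auto
  also have "\<dots> \<le> n * (\<Sum>j\<in>J. Inf (A j) + d)"
    using assms(5) c(2) by (intro mult_left_mono sum_mono) (auto simp: less_imp_le)
  also have "\<dots> \<le> n * (\<Sum>j\<in>J. Inf (A j)) + e"
    using d(2) by (simp add: sum.distrib algebra_simps)
  finally show "Inf B \<le> n * (\<Sum>j\<in>J. Inf (A j)) + e" .
qed

lemma sum_cInf_le_card_mult_cInf:
  fixes A :: "'j \<Rightarrow> real set" and B :: "real set"
  assumes "B \<noteq> {}" "\<And>j. j \<in> J \<Longrightarrow> B \<subseteq> A j" "\<And>j. j \<in> J \<Longrightarrow> bdd_below (A j)"
  shows "(\<Sum>j\<in>J. Inf (A j)) \<le> real (card J) * Inf B"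
proof -
  have "(\<Sum>j\<in>J. Inf (A j)) \<le> (\<Sum>j\<in>J. Inf B)"
    using assms by (intro sum_mono cInf_superset_mono) auto
  then show ?thesis by simp
qed

lemma dsum_calderon_set_eq:
  assumes "finite J" "J \<noteq> {}" "\<And>j. j \<in> J \<Longrightarrow> banach_lattice M (X j) (NX j)"
    and "banach_lattice M Y NY" "0 < \<theta>" "\<theta> < 1"
  shows "dsum_set M J (\<lambda>j. calderon_set M (X j) (NX j) Y NY \<theta>)
    = calderon_set M (dsum_set M J X) (dsum_norm J NX) Y NY \<theta>"
proof (intro set_eqI iffI)
  fix x
  assume "x \<in> dsum_set M J (\<lambda>j. calderon_set M (X j) (NX j) Y NY \<theta>)"
  then have x: "x \<in> borel_measurable M" "\<forall>j\<in>J. \<exists>c. calderon_witness M (X j) (NX j) Y NY \<theta> x c"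
    by (auto simp: dsum_set_def calderon_set_def)
  from bchoice[OF x(2)] obtain c where "\<forall>j\<in>J. calderon_witness M (X j) (NX j) Y NY \<theta> x (c j)"
    by blast
  then have "calderon_witness M (dsum_set M J X) (dsum_norm J NX) Y NY \<theta> x (real (card J) * sum c J)"
    using calderon_witness_dsum[where X = X and NX = NX, OF assms] by blast
  then show "x \<in> calderon_set M (dsum_set M J X) (dsum_norm J NX) Y NY \<theta>"
    using x(1) by (auto simp: calderon_set_def)
next
  fix x
  assume "x \<in> calderon_set M (dsum_set M J X) (dsum_norm J NX) Y NY \<theta>"
  then obtain c where x: "x \<in> borel_measurable M"
    "calderon_witness M (dsum_set M J X) (dsum_norm J NX) Y NY \<theta> x c"
    unfolding calderon_set_def by blast
  then show "x \<in> dsum_set M J (\<lambda>j. calderon_set M (X j) (NX j) Y NY \<theta>)"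
    using calderon_witness_dsum_component[OF x(2) assms(1) _ assms(3)]
    unfolding dsum_set_def calderon_set_def by blast
qed

lemma calderon_norm_dsum_le:
  assumes "finite J" "J \<noteq> {}" "\<And>j. j \<in> J \<Longrightarrow> banach_lattice M (X j) (NX j)"
    and "banach_lattice M Y NY" "0 < \<theta>" "\<theta> < 1"
    and "x \<in> dsum_set M J (\<lambda>j. calderon_set M (X j) (NX j) Y NY \<theta>)"
  shows "calderon_norm M (dsum_set M J X) (dsum_norm J NX) Y NY \<theta> x
    \<le> real (card J) * dsum_norm J (\<lambda>j. calderon_norm M (X j) (NX j) Y NY \<theta>) x"
proof -
  have "Inf {c. calderon_witness M (dsum_set M J X) (dsum_norm J NX) Y NY \<theta> x c}
    \<le> real (card J) * (\<Sum>j\<in>J. Inf {c. calderon_witness M (X j) (NX j) Y NY \<theta> x c})"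
    using assms(1,7) calderon_witness_dsum[where X = X and NX = NX, OF assms(1-6)]
    by (intro cInf_le_scaled_sum_cInf bdd_below_calderon_witness)
      (auto simp: dsum_set_def calderon_set_def)
  then show ?thesis
    by (simp add: calderon_norm_def dsum_norm_def)
qed

lemma dsum_calderon_norm_le:
  assumes "finite J" "\<And>j. j \<in> J \<Longrightarrow> banach_lattice M (X j) (NX j)"
    and "x \<in> calderon_set M (dsum_set M J X) (dsum_norm J NX) Y NY \<theta>"
  shows "dsum_norm J (\<lambda>j. calderon_norm M (X j) (NX j) Y NY \<theta>) x
    \<le> real (card J) * calderon_norm M (dsum_set M J X) (dsum_norm J NX) Y NY \<theta> x"
proof -
  have "(\<Sum>j\<in>J. Inf {c. calderon_witness M (X j) (NX j) Y NY \<theta> x c})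
    \<le> real (card J) * Inf {c. calderon_witness M (dsum_set M J X) (dsum_norm J NX) Y NY \<theta> x c}"
    using assms(3) calderon_witness_dsum_component[where X = X and NX = NX, OF _ assms(1) _ assms(2)]
    by (intro sum_cInf_le_card_mult_cInf bdd_below_calderon_witness)
      (auto simp: calderon_set_def)
  then show ?thesis
    by (simp add: calderon_norm_def dsum_norm_def)
qed

theorem lemma4p9:
  fixes M :: "'a measure" and J :: "'j set"
    and X :: "'j \<Rightarrow> ('a \<Rightarrow> real) set" and NX :: "'j \<Rightarrow> ('a \<Rightarrow> real) \<Rightarrow> real"
    and Y :: "('a \<Rightarrow> real) set" and NY :: "('a \<Rightarrow> real) \<Rightarrow> real"
    and \<theta> :: real
  assumes "finite J" and "J \<noteq> {}"
    and "\<And>j. j \<in> J \<Longrightarrow> banach_lattice M (X j) (NX j)"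
    and "banach_lattice M Y NY"
    and "0 < \<theta>" and "\<theta> < 1"
  shows "dsum_set M J (\<lambda>j. calderon_set M (X j) (NX j) Y NY \<theta>)
           = calderon_set M (dsum_set M J X) (dsum_norm J NX) Y NY \<theta>
       \<and> (\<forall>x \<in> dsum_set M J (\<lambda>j. calderon_set M (X j) (NX j) Y NY \<theta>).
            calderon_norm M (dsum_set M J X) (dsum_norm J NX) Y NY \<theta> x
              \<le> real (card J) * dsum_norm J (\<lambda>j. calderon_norm M (X j) (NX j) Y NY \<theta>) x)
       \<and> (\<forall>x \<in> calderon_set M (dsum_set M J X) (dsum_norm J NX) Y NY \<theta>.
            dsum_norm J (\<lambda>j. calderon_norm M (X j) (NX j) Y NY \<theta>) x
              \<le> real (card J) * calderon_norm M (dsum_set M J X) (dsum_norm J NX) Y NY \<theta> x)"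
proof (intro conjI ballI)
  show "dsum_set M J (\<lambda>j. calderon_set M (X j) (NX j) Y NY \<theta>)
    = calderon_set M (dsum_set M J X) (dsum_norm J NX) Y NY \<theta>"
    by (intro dsum_calderon_set_eq assms)
next
  fix x
  assume "x \<in> dsum_set M J (\<lambda>j. calderon_set M (X j) (NX j) Y NY \<theta>)"
  then show "calderon_norm M (dsum_set M J X) (dsum_norm J NX) Y NY \<theta> x
    \<le> real (card J) * dsum_norm J (\<lambda>j. calderon_norm M (X j) (NX j) Y NY \<theta>) x"
    by (intro calderon_norm_dsum_le assms)
next
  fix x
  assume "x \<in> calderon_set M (dsum_set M J X) (dsum_norm J NX) Y NY \<theta>"
  then show "dsum_norm J (\<lambda>j. calderon_norm M (X j) (NX j) Y NY \<theta>) x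
    \<le> real (card J) * calderon_norm M (dsum_set M J X) (dsum_norm J NX) Y NY \<theta> x"
    by (intro dsum_calderon_norm_le assms)
qed

end
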